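(* Let $Z$ be a nonempty compact metric space. Then there exists a topologically mixing dynamical system $(X,T)$ whose set of minimal points is homeomorphic to $Z$ and such that every minimal point of $(X,T)$ is a fixed point.
   Context: A dynamical system $(X,T)$: $X$ is a compact metric space with more than one point and without isolated points, $T:X\to X$ a continuous surjection. $(X,T)$ is topologically mixing if for all nonempty open $U,V\subset X$ the set $\{n\in\mathbb{Z}_+:U\cap T^{-n}V\neq\varnothing\}$ is cofinite. A point is minimal if it lies in a minimal subset, i.e. a nonempty closed $T$-invariant set containing no nonempty closed proper subset $K'$ with $TK'\subset K'$. *)

theory Defs
  imports "HOL-Analysis.Analysis"
begin

definition dyn_system :: "'a::metric_space set \<Rightarrow> ('a \<Rightarrow> 'a) \<Rightarrow> bool" where
  "dyn_system X T \<longleftrightarrow> compact X \<and> (\<exists>x\<in>X. \<exists>y\<in>X. x \<noteq> y) \<and> (\<forall>x\<in>X. x islimpt X)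
     \<and> continuous_on X T \<and> T ` X = X"

definition top_mixing :: "'a::topological_space set \<Rightarrow> ('a \<Rightarrow> 'a) \<Rightarrow> bool" where
  "top_mixing X T \<longleftrightarrow>
     (\<forall>U V. openin (top_of_set X) U \<longrightarrow> openin (top_of_set X) V \<longrightarrow> U \<noteq> {} \<longrightarrow> V \<noteq> {} \<longrightarrow>
        finite {n::nat. U \<inter> {x\<in>X. (T ^^ n) x \<in> V} = {}})"

definition minimal_subset :: "'a::topological_space set \<Rightarrow> ('a \<Rightarrow> 'a) \<Rightarrow> 'a set \<Rightarrow> bool" where
  "minimal_subset X T K \<longleftrightarrow> K \<subseteq> X \<and> K \<noteq> {} \<and> closed K \<and> T ` K \<subseteq> K \<and>
     \<not> (\<exists>K'. K' \<subset> K \<and> K' \<noteq> {} \<and> closed K' \<and> T ` K' \<subseteq> K')"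

definition minimal_points :: "'a::topological_space set \<Rightarrow> ('a \<Rightarrow> 'a) \<Rightarrow> 'a set" where
  "minimal_points X T = {x. \<exists>K. minimal_subset X T K \<and> x \<in> K}"

end

theory Submission
  imports Defs
begin

text \<open>
  Points of the model system are sequences of pairs (mark, label) with marks in \<open>{0, 1}\<close> and
  labels in \<open>Z\<close>, where the label may only change right after a mark and every window of length
  \<open>n\<close> carries at most \<open>\<surd>n\<close> marks; the map is the left shift. Two cylinders of length \<open>m\<close>
  are joined at every large time \<open>n\<close> by a sequence that copies the first, stays unmarked for
  \<open>(2m + 1)\<^sup>2\<close> steps, switches label with a single mark, stays unmarked again and copies the
  second from time \<open>n\<close> on; this gives mixing. On the other hand the marks have density zero, so
  every orbit meets arbitrarily long unmarked blocks, and by compactness every closed invariant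
  set contains a sequence without marks, which is constant and hence fixed. So the minimal points
  are exactly the constant sequences, a copy of \<open>Z\<close>. Finally the compact metric state space
  embeds into \<open>\<real>\<^sup>\<nat>\<close> via the distances to a countable dense subset, which transports the system.
\<close>

lemma compact_countable_dense_subset:
  fixes S :: "'b::metric_space set"
  assumes "compact S"
  obtains D where "countable D" "D \<subseteq> S" "\<And>x e. x \<in> S \<Longrightarrow> e > 0 \<Longrightarrow> \<exists>d\<in>D. dist x d < e"
proof -
  have "\<exists>k. finite k \<and> k \<subseteq> S \<and> S \<subseteq> (\<Union>x\<in>k. ball x (1 / real (Suc n)))" for n :: nat
    using seq_compact_imp_totally_bounded[OF compact_imp_seq_compact[OF assms]] by simp
  then obtain net where net: "\<And>n. finite (net n)" "\<And>n. net n \<subseteq> S"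
    "\<And>n. S \<subseteq> (\<Union>x\<in>net n. ball x (1 / real (Suc n)))"
    by metis
  show ?thesis
  proof
    show "countable (\<Union>n. net n)" using net(1) by (simp add: countable_finite)
    show "(\<Union>n. net n) \<subseteq> S" using net(2) by blast
    fix x e assume "x \<in> S" "e > (0::real)"
    obtain n where n: "1 / real (Suc n) < e"
      using \<open>e > 0\<close> by (metis reals_Archimedean inverse_eq_divide)
    obtain d where "d \<in> net n" "dist x d < 1 / real (Suc n)"
      using net(3)[of n] \<open>x \<in> S\<close> by (auto simp: dist_commute)
    then show "\<exists>d\<in>\<Union>n. net n. dist x d < e" using n by (intro bexI[of _ d]) auto
  qed
qed

lemma compact_homeomorphic_real_sequences:
  fixes S :: "'b::metric_space set"
  assumes "compact S"
  obtains Y :: "(nat \<Rightarrow> real) set" and \<phi> \<psi> where "homeomorphism S Y \<phi> \<psi>"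
proof (cases "S = {}")
  case True
  then show ?thesis using that homeomorphism_empty by blast
next
  case False
  obtain D where D: "countable D" "D \<subseteq> S" "\<And>x e. x \<in> S \<Longrightarrow> e > 0 \<Longrightarrow> \<exists>d\<in>D. dist x d < e"
    using compact_countable_dense_subset[OF assms] by blast
  have "D \<noteq> {}"
  proof -
    obtain x where "x \<in> S" using False by blast
    then show ?thesis using D(3)[of x 1] by auto
  qed
  define \<phi> where "\<phi> = (\<lambda>x k. dist x (from_nat_into D k))"
  have "inj_on \<phi> S"
  proof (rule inj_onI)
    fix x x' assume "x \<in> S" "x' \<in> S" and eq: "\<phi> x = \<phi> x'"
    have "dist x x' < e" if "e > 0" for e
    proof -
      obtain d where "d \<in> D" "dist x d < e / 2" using D(3)[OF \<open>x \<in> S\<close>] \<open>e > 0\<close> by (meson half_gt_zero)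
      moreover obtain k where "from_nat_into D k = d" using from_nat_into_surj[OF D(1) \<open>d \<in> D\<close>] by blast
      ultimately have k: "d = from_nat_into D k" "dist x d < e / 2" by auto
      then have "dist x' d = dist x d" using fun_cong[OF eq, of k] by (simp add: \<phi>_def)
      then show ?thesis using k dist_triangle[of x x' d] by (simp add: dist_commute)
    qed
    then show "x = x'" by (metis dist_pos_lt less_irrefl)
  qed
  moreover have "continuous_on S \<phi>" unfolding \<phi>_def by (intro continuous_intros)
  ultimately obtain \<psi> where "homeomorphism S (\<phi> ` S) \<phi> \<psi>"
    using homeomorphism_compact[OF assms, of \<phi> "\<phi> ` S"] by blast
  then show ?thesis by (rule that)
qed

lemma funpow_semiconj:
  assumes "T ` X \<subseteq> X" "\<And>x. x \<in> X \<Longrightarrow> S (\<phi> x) = \<phi> (T x)" "x \<in> X"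
  shows "(S ^^ n) (\<phi> x) = \<phi> ((T ^^ n) x) \<and> (T ^^ n) x \<in> X"
  using assms(3) by (induction n) (use assms(1,2) in auto)

lemma dyn_system_conjugate:
  assumes hom: "homeomorphism X Y \<phi> \<psi>" and sys: "dyn_system X T"
    and conj: "\<And>x. x \<in> X \<Longrightarrow> S (\<phi> x) = \<phi> (T x)"
  shows "dyn_system Y S"
  unfolding dyn_system_def
proof (intro conjI)
  have cX: "compact X" and two: "\<exists>x\<in>X. \<exists>y\<in>X. x \<noteq> y" and perfect: "\<forall>x\<in>X. x islimpt X"
    and cT: "continuous_on X T" and sT: "T ` X = X"
    using sys unfolding dyn_system_def by auto
  have Y: "Y = \<phi> ` X" using homeomorphism_image1[OF hom] by simp
  have inj: "inj_on \<phi> X" using homeomorphism_apply1[OF hom] by (rule inj_on_inverseI)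
  have c\<phi>: "continuous_on X \<phi>" and c\<psi>: "continuous_on Y \<psi>"
    using homeomorphism_cont1[OF hom] homeomorphism_cont2[OF hom] .
  show "compact Y" using Y cX c\<phi> compact_continuous_image by blast
  show "\<exists>x\<in>Y. \<exists>y\<in>Y. x \<noteq> y" using two inj Y by (metis image_eqI inj_on_contraD)
  show "\<forall>y\<in>Y. y islimpt Y"
  proof
    fix y assume "y \<in> Y"
    then obtain x where x: "x \<in> X" "y = \<phi> x" using Y by auto
    then obtain f where f: "\<And>n. f n \<in> X - {x}" "f \<longlonglongrightarrow> x"
      using perfect unfolding islimpt_sequential by blast
    have "(\<phi> \<circ> f) \<longlonglongrightarrow> \<phi> x" using c\<phi> x(1) f by (metis DiffD1 continuous_on_sequentially)
    moreover have "(\<phi> \<circ> f) n \<in> Y - {\<phi> x}" for n using f x inj Y by (auto simp: inj_on_eq_iff)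
    ultimately show "y islimpt Y" unfolding islimpt_sequential x(2) by blast
  qed
  have "S y = \<phi> (T (\<psi> y))" if "y \<in> Y" for y
    using that conj homeomorphism_apply2[OF hom] homeomorphism_image2[OF hom] by (metis imageI)
  moreover have "continuous_on Y (\<phi> \<circ> T \<circ> \<psi>)"
    using c\<phi> cT c\<psi> homeomorphism_image2[OF hom] sT
    by (intro continuous_on_compose) auto
  ultimately show "continuous_on Y S" by (simp add: continuous_on_eq)
  have "S ` Y = \<phi> ` T ` X" using Y conj by (simp add: image_image)
  then show "S ` Y = Y" using Y sT by simp
qed

lemma top_mixing_factor:
  assumes mix: "top_mixing X T" and c\<phi>: "continuous_on X \<phi>" and Y: "\<phi> ` X = Y"
    and inv: "T ` X \<subseteq> X" and conj: "\<And>x. x \<in> X \<Longrightarrow> S (\<phi> x) = \<phi> (T x)"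
  shows "top_mixing Y S"
  unfolding top_mixing_def
proof (intro allI impI)
  fix U V assume U: "openin (top_of_set Y) U" and V: "openin (top_of_set Y) V"
    and "U \<noteq> {}" "V \<noteq> {}"
  define U' where "U' = {x\<in>X. \<phi> x \<in> U}"
  define V' where "V' = {x\<in>X. \<phi> x \<in> V}"
  have "openin (top_of_set X) U'" "openin (top_of_set X) V'"
    using continuous_openin_preimage[OF c\<phi> _ U] continuous_openin_preimage[OF c\<phi> _ V] Y
    by (auto simp: U'_def V'_def vimage_def Int_def conj_commute)
  moreover have "U' \<noteq> {}" "V' \<noteq> {}"
    using \<open>U \<noteq> {}\<close> \<open>V \<noteq> {}\<close> openin_subset[OF U] openin_subset[OF V] Y
    by (auto simp: U'_def V'_def)
  ultimately have "finite {n. U' \<inter> {x\<in>X. (T ^^ n) x \<in> V'} = {}}"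
    using mix unfolding top_mixing_def by blast
  moreover have "{n. U \<inter> {y\<in>Y. (S ^^ n) y \<in> V} = {}} \<subseteq> {n. U' \<inter> {x\<in>X. (T ^^ n) x \<in> V'} = {}}"
    using funpow_semiconj[of T X S \<phi>, OF inv conj] Y by (fastforce simp: U'_def V'_def)
  ultimately show "finite {n. U \<inter> {y\<in>Y. (S ^^ n) y \<in> V} = {}}" by (rule finite_subset[rotated])
qed

definition invariant_closed_sets_have_fixpoints :: "'a::topological_space set \<Rightarrow> ('a \<Rightarrow> 'a) \<Rightarrow> bool"
  where "invariant_closed_sets_have_fixpoints X T \<longleftrightarrow>
    (\<forall>K. K \<subseteq> X \<longrightarrow> K \<noteq> {} \<longrightarrow> closed K \<longrightarrow> T ` K \<subseteq> K \<longrightarrow> (\<exists>x\<in>K. T x = x))"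

lemma minimal_points_eq_fixpoints:
  fixes X :: "'a::t1_space set"
  assumes "invariant_closed_sets_have_fixpoints X T"
  shows "minimal_points X T = {x\<in>X. T x = x}"
proof
  show "minimal_points X T \<subseteq> {x\<in>X. T x = x}"
  proof
    fix x assume "x \<in> minimal_points X T"
    then obtain K where "minimal_subset X T K" "x \<in> K" unfolding minimal_points_def by auto
    then have K: "K \<subseteq> X" "K \<noteq> {}" "closed K" "T ` K \<subseteq> K"
      and K_minimal: "\<not> (\<exists>K'. K' \<subset> K \<and> K' \<noteq> {} \<and> closed K' \<and> T ` K' \<subseteq> K')"
      unfolding minimal_subset_def by auto
    obtain y where y: "y \<in> K" "T y = y"
      using assms K unfolding invariant_closed_sets_have_fixpoints_def by blast
    then have "K = {y}" using K_minimal by auto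
    then show "x \<in> {x\<in>X. T x = x}" using \<open>x \<in> K\<close> y K by auto
  qed
  show "{x\<in>X. T x = x} \<subseteq> minimal_points X T"
    by (auto simp: minimal_points_def minimal_subset_def)
qed

lemma invariant_closed_sets_have_fixpoints_conjugate:
  fixes X :: "'a::t2_space set" and Y :: "'b::topological_space set"
  assumes hom: "homeomorphism X Y \<phi> \<psi>" and "compact X"
    and fp: "invariant_closed_sets_have_fixpoints X T" and inv: "T ` X \<subseteq> X"
    and conj: "\<And>x. x \<in> X \<Longrightarrow> S (\<phi> x) = \<phi> (T x)"
  shows "invariant_closed_sets_have_fixpoints Y S"
  unfolding invariant_closed_sets_have_fixpoints_def
proof (intro allI impI)
  fix K assume K: "K \<subseteq> Y" "K \<noteq> {}" "closed K" "S ` K \<subseteq> K"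
  have "compact Y"
    using compact_continuous_image[OF homeomorphism_cont1[OF hom] \<open>compact X\<close>]
    by (simp add: homeomorphism_image1[OF hom])
  then have "compact K" using K(1,3) by (metis compact_Int_closed inf.absorb2)
  then have "closed (\<psi> ` K)"
    using continuous_on_subset[OF homeomorphism_cont2[OF hom] K(1)]
    by (simp add: compact_continuous_image compact_imp_closed)
  moreover have "\<psi> ` K \<subseteq> X" using K(1) homeomorphism_image2[OF hom] by auto
  moreover have "T ` \<psi> ` K \<subseteq> \<psi> ` K"
  proof clarify
    fix k assume "k \<in> K"
    then have "\<psi> k \<in> X" "\<phi> (\<psi> k) = k" using K(1) hom by (auto simp: homeomorphism_def)
    then have "\<phi> (T (\<psi> k)) \<in> K" using conj K(4) \<open>k \<in> K\<close> by force
    moreover have "\<psi> (\<phi> (T (\<psi> k))) = T (\<psi> k)"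
      using homeomorphism_apply1[OF hom] inv \<open>\<psi> k \<in> X\<close> by auto
    ultimately show "T (\<psi> k) \<in> \<psi> ` K" by (metis image_eqI)
  qed
  ultimately obtain k where k: "k \<in> K" "T (\<psi> k) = \<psi> k"
    using fp K(2) unfolding invariant_closed_sets_have_fixpoints_def by blast
  then have "S k = k"
    using conj[of "\<psi> k"] K(1) hom by (auto simp: homeomorphism_def)
  then show "\<exists>k\<in>K. S k = k" using k by blast
qed

lemma fixpoints_conjugate_homeomorphic:
  assumes hom: "homeomorphism X Y \<phi> \<psi>" and inv: "T ` X \<subseteq> X"
    and conj: "\<And>x. x \<in> X \<Longrightarrow> S (\<phi> x) = \<phi> (T x)"
  shows "{y\<in>Y. S y = y} homeomorphic {x\<in>X. T x = x}"
proof -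
  have Y: "Y = \<phi> ` X" using homeomorphism_image1[OF hom] by simp
  have "inj_on \<phi> X" using homeomorphism_apply1[OF hom] by (rule inj_on_inverseI)
  then have "{y\<in>Y. S y = y} = \<phi> ` {x\<in>X. T x = x}"
    using inv conj unfolding Y by (auto simp: inj_on_eq_iff image_subset_iff)
  moreover have "homeomorphism {x\<in>X. T x = x} (\<phi> ` {x\<in>X. T x = x}) \<phi> \<psi>"
    by (rule homeomorphism_of_subsets[OF hom]) (auto simp: Y)
  ultimately have "homeomorphism {y\<in>Y. S y = y} {x\<in>X. T x = x} \<psi> \<phi>"
    by (simp add: homeomorphism_symD)
  then show ?thesis unfolding homeomorphic_def by blast
qed

definition seq_shift :: "(nat \<Rightarrow> 'b) \<Rightarrow> nat \<Rightarrow> 'b" where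
  "seq_shift x = (\<lambda>i. x (Suc i))"

text \<open>The first component of a term is its mark, the second its label. Marks are the reals \<open>0\<close>
  and \<open>1\<close>, so that the marks in a window are counted by a sum.\<close>
definition sparse_marked_seqs :: "'a set \<Rightarrow> (nat \<Rightarrow> real \<times> 'a) set" where
  "sparse_marked_seqs Z = {x. (\<forall>i. fst (x i) = 0 \<or> fst (x i) = 1) \<and> (\<forall>i. snd (x i) \<in> Z) \<and>
     (\<forall>i. snd (x (Suc i)) = snd (x i) \<or> fst (x i) = 1) \<and>
     (\<forall>s n. (\<Sum>i\<in>{s..<s+n}. fst (x i))\<^sup>2 \<le> real n)}"

lemma sparse_marked_seqsD:
  assumes "x \<in> sparse_marked_seqs Z"
  shows "fst (x i) = 0 \<or> fst (x i) = 1" "snd (x i) \<in> Z"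
    "snd (x (Suc i)) = snd (x i) \<or> fst (x i) = 1"
    "(\<Sum>i\<in>{s..<s+n}. fst (x i))\<^sup>2 \<le> real n"
  using assms unfolding sparse_marked_seqs_def by auto

lemma sparse_marked_seqs_mark_bounds:
  assumes "x \<in> sparse_marked_seqs Z"
  shows "0 \<le> fst (x i)" "fst (x i) \<le> 1"
  using sparse_marked_seqsD(1)[OF assms, of i] by auto

lemma power2_mono_trans:
  fixes a b c :: real
  shows "0 \<le> a \<Longrightarrow> a \<le> b \<Longrightarrow> b\<^sup>2 \<le> c \<Longrightarrow> a\<^sup>2 \<le> c"
  by (meson order_trans power_mono)

lemma sparse_marked_seqs_subwindow:
  assumes x: "x \<in> sparse_marked_seqs Z" and A: "A \<subseteq> {s..<s+n}"
  shows "(\<Sum>i\<in>A. fst (x i))\<^sup>2 \<le> real n"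
proof (rule power2_mono_trans)
  show "0 \<le> (\<Sum>i\<in>A. fst (x i))"
    using sparse_marked_seqs_mark_bounds[OF x] by (simp add: sum_nonneg)
  show "(\<Sum>i\<in>A. fst (x i)) \<le> (\<Sum>i\<in>{s..<s+n}. fst (x i))"
    using A sparse_marked_seqs_mark_bounds[OF x] by (intro sum_mono2) auto
qed (rule sparse_marked_seqsD(4)[OF x])

lemma continuous_on_seq_component [continuous_intros]:
  "continuous_on UNIV (\<lambda>x::nat \<Rightarrow> real \<times> 'a::metric_space. fst (x i))"
  "continuous_on UNIV (\<lambda>x::nat \<Rightarrow> real \<times> 'a::metric_space. snd (x i))"
  by (intro continuous_intros continuous_on_product_coordinates)+

lemma closed_sparse_marked_seqs:
  fixes Z :: "'a::metric_space set"
  assumes "closed Z"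
  shows "closed (sparse_marked_seqs Z)"
proof -
  have "sparse_marked_seqs Z =
      (\<Inter>i. {x. fst (x i) = 0} \<union> {x. fst (x i) = 1}) \<inter> (\<Inter>i. (\<lambda>x. snd (x i)) -` Z)
      \<inter> (\<Inter>i. {x. snd (x (Suc i)) = snd (x i)} \<union> {x. fst (x i) = 1})
      \<inter> (\<Inter>s. \<Inter>n. {x. (\<Sum>i\<in>{s..<s+n}. fst (x i))\<^sup>2 \<le> real n})"
    unfolding sparse_marked_seqs_def by auto
  also have "closed \<dots>"
    by (intro closed_Int closed_INT ballI closed_Un closed_Collect_eq closed_Collect_le
        closed_vimage assms continuous_intros)
  finally show ?thesis .
qed

lemma compact_sparse_marked_seqs:
  fixes Z :: "'a::metric_space set"
  assumes "compact Z"
  shows "compact (sparse_marked_seqs Z)"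
proof -
  have "compactin (product_topology (\<lambda>i. euclidean) UNIV) (PiE UNIV (\<lambda>i::nat. {0::real, 1} \<times> Z))"
    by (simp add: compactin_PiE compactin_euclidean_iff assms compact_Times)
  then have "compact (PiE UNIV (\<lambda>i::nat. {0::real, 1} \<times> Z))"
    by (simp add: euclidean_product_topology compactin_euclidean_iff)
  moreover have "sparse_marked_seqs Z \<subseteq> PiE UNIV (\<lambda>i::nat. {0::real, 1} \<times> Z)"
    unfolding sparse_marked_seqs_def by (auto simp: PiE_iff mem_Times_iff)
  ultimately show ?thesis
    using compact_Int_closed[OF _ closed_sparse_marked_seqs[OF compact_imp_closed[OF assms]]]
    by (metis inf.absorb2)
qed

lemma funpow_seq_shift: "(seq_shift ^^ n) x = (\<lambda>i. x (i + n))"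
  by (induction n arbitrary: x) (auto simp: seq_shift_def funpow_Suc_right)

lemma continuous_on_seq_shift: "continuous_on S (seq_shift :: (nat \<Rightarrow> 'b::topological_space) \<Rightarrow> _)"
  unfolding seq_shift_def
  by (intro continuous_on_coordinatewise_then_product
      continuous_on_subset[OF continuous_on_product_coordinates]) auto

lemma seq_shift_in_sparse_marked_seqs:
  assumes x: "x \<in> sparse_marked_seqs Z"
  shows "seq_shift x \<in> sparse_marked_seqs Z"
proof -
  have "(\<Sum>i\<in>{s..<s+n}. fst (x (Suc i)))\<^sup>2 \<le> real n" for s n
    using sparse_marked_seqsD(4)[OF x, of "Suc s" n] sum.shift_bounds_Suc_ivl[of "\<lambda>i. fst (x i)" s "s+n"]
    by simp
  then show ?thesis using x unfolding sparse_marked_seqs_def seq_shift_def by auto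
qed

lemma funpow_seq_shift_in_sparse_marked_seqs:
  "x \<in> sparse_marked_seqs Z \<Longrightarrow> (seq_shift ^^ n) x \<in> sparse_marked_seqs Z"
  by (induction n) (auto simp: seq_shift_in_sparse_marked_seqs)

lemma seq_shift_image_sparse_marked_seqs: "seq_shift ` sparse_marked_seqs Z = sparse_marked_seqs Z"
proof
  show "seq_shift ` sparse_marked_seqs Z \<subseteq> sparse_marked_seqs Z"
    using seq_shift_in_sparse_marked_seqs by blast
  show "sparse_marked_seqs Z \<subseteq> seq_shift ` sparse_marked_seqs Z"
  proof
    fix x assume x: "x \<in> sparse_marked_seqs Z"
    define w where "w = (\<lambda>i. if i = 0 then (0::real, snd (x 0)) else x (i - 1))"
    have "(\<Sum>i\<in>{s..<s+n}. fst (w i))\<^sup>2 \<le> real n" for s n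
    proof -
      have "(\<Sum>i\<in>{s..<s+n}. fst (w i)) = (\<Sum>i\<in>{s..<s+n} - {0}. fst (x (i - 1)))"
        by (rule sum.mono_neutral_cong_right) (auto simp: w_def)
      also have "\<dots> = (\<Sum>j\<in>(\<lambda>i. i - 1) ` ({s..<s+n} - {0}). fst (x j))"
        by (rule sum.reindex[symmetric, unfolded comp_def]) (auto simp: inj_on_def)
      moreover have "(\<lambda>i. i - 1) ` ({s..<s+n} - {0}) \<subseteq> {s - 1..<s - 1 + n}" by auto
      ultimately show ?thesis using sparse_marked_seqs_subwindow[OF x] by metis
    qed
    moreover have "snd (w (Suc i)) = snd (w i) \<or> fst (w i) = 1" for i
      using sparse_marked_seqsD(3)[OF x, of "i - 1"] by (cases i) (auto simp: w_def)
    ultimately have "w \<in> sparse_marked_seqs Z"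
      using sparse_marked_seqsD(1,2)[OF x] unfolding sparse_marked_seqs_def w_def by auto
    moreover have "seq_shift w = x" by (simp add: w_def seq_shift_def)
    ultimately show "x \<in> seq_shift ` sparse_marked_seqs Z" by blast
  qed
qed

lemma open_contains_cylinder:
  fixes U :: "(nat \<Rightarrow> 'b::topological_space) set"
  assumes "open U" "u \<in> U"
  obtains m where "\<And>w. (\<forall>i<m. w i = u i) \<Longrightarrow> w \<in> U"
proof -
  have "openin (product_topology (\<lambda>i. euclidean) UNIV) U"
    using assms(1) by (simp add: euclidean_product_topology)
  from product_topology_open_contains_basis[OF this assms(2)] obtain B where
    B: "u \<in> PiE UNIV B" "finite {i. B i \<noteq> UNIV}" "PiE UNIV B \<subseteq> U" by auto
  obtain m where m: "{i. B i \<noteq> UNIV} \<subseteq> {..<m}" using B(2) finite_nat_iff_bounded by auto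
  show ?thesis
  proof (rule that)
    fix w :: "nat \<Rightarrow> 'b" assume "\<forall>i<m. w i = u i"
    then have "w i \<in> B i" for i
      using B(1) m by (cases "B i = UNIV") (auto simp: PiE_iff)
    then show "w \<in> U" using B(3) by (auto simp: PiE_iff)
  qed
qed

definition join_seqs ::
    "(nat \<Rightarrow> real \<times> 'a) \<Rightarrow> (nat \<Rightarrow> real \<times> 'a) \<Rightarrow> nat \<Rightarrow> nat \<Rightarrow> nat \<Rightarrow> nat \<Rightarrow> real \<times> 'a"
  where "join_seqs u v m h n i =
    (if i < m then u i
     else if i < m + h then (0, snd (u (m - 1)))
     else if i = m + h then (1, snd (u (m - 1)))
     else if i < n then (0, snd (v 0))
     else if i < n + m then v (i - n)
     else (0, snd (v (m - 1))))"

lemma join_seqs_prefix: "i < m \<Longrightarrow> join_seqs u v m h n i = u i"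
  by (simp add: join_seqs_def)

lemma join_seqs_suffix: "i < m \<Longrightarrow> m + h < n \<Longrightarrow> join_seqs u v m h n (i + n) = v i"
  by (simp add: join_seqs_def)

lemma fst_join_seqs:
  "m + h < n \<Longrightarrow> fst (join_seqs u v m h n i) =
    (if i < m then fst (u i) else if i = m + h then 1
     else if n \<le> i \<and> i < n + m then fst (v (i - n)) else 0)"
  by (auto simp: join_seqs_def)

lemma join_seqs_window:
  assumes u: "u \<in> sparse_marked_seqs Z" and v: "v \<in> sparse_marked_seqs Z"
    and h: "(2 * m + 1)\<^sup>2 \<le> h" and n: "m + 2 * h < n"
  shows "(\<Sum>i\<in>{s..<s+len}. fst (join_seqs u v m h n i))\<^sup>2 \<le> real len"
proof -
  let ?w = "\<lambda>i. fst (join_seqs u v m h n i)"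
  let ?W = "{s..<s+len}"
  have "m + h < n" using n by linarith
  note w = fst_join_seqs[OF this, of u v]
  have w_bounds: "0 \<le> ?w i" "?w i \<le> 1" for i
    using sparse_marked_seqs_mark_bounds[OF u, of i] sparse_marked_seqs_mark_bounds[OF v, of "i - n"]
    by (auto simp: w)
  have S0: "0 \<le> sum ?w ?W" using w_bounds by (simp add: sum_nonneg)
  consider (before) "s + len \<le> m + h" | (after) "m + h < s" | (across) "s \<le> m + h" "m + h < s + len"
    by linarith
  then show ?thesis
  proof cases
    case before
    have "sum ?w ?W \<le> (\<Sum>i\<in>?W. fst (u i))"
      using before \<open>m + h < n\<close> sparse_marked_seqs_mark_bounds[OF u] by (intro sum_mono) (auto simp: w)
    then show ?thesis using power2_mono_trans[OF S0 _ sparse_marked_seqsD(4)[OF u]] by blast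
  next
    case after
    have "sum ?w ?W = (\<Sum>i\<in>?W \<inter> {n..<n+m}. fst (v (i - n)))"
      using after by (intro sum.mono_neutral_cong_right) (auto simp: w)
    also have "\<dots> = (\<Sum>j\<in>(\<lambda>i. i - n) ` (?W \<inter> {n..<n+m}). fst (v j))"
      by (rule sum.reindex[symmetric, unfolded comp_def]) (auto simp: inj_on_def)
    finally show ?thesis
      using sparse_marked_seqs_subwindow[OF v, of "(\<lambda>i. i - n) ` (?W \<inter> {n..<n+m})" "s - n" len]
      by fastforce
  next
    case across
    define B where "B = {..<m} \<union> {m + h} \<union> {n..<n+m}"
    have "sum ?w ?W = sum ?w (?W \<inter> B)"
      by (rule sum.mono_neutral_right) (auto simp: w B_def)
    also have "\<dots> \<le> real (card (?W \<inter> B))"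
      using w_bounds sum_mono[of "?W \<inter> B" ?w "\<lambda>_. 1"] by simp
    finally have S_card: "sum ?w ?W \<le> real (card (?W \<inter> B))" .
    \<comment> \<open>A window through the switching mark is either long enough to absorb all \<open>2m + 1\<close> possible
      marks, or shorter than \<open>h\<close> and then meets no mark but the switching one.\<close>
    show ?thesis
    proof (cases "(2 * m + 1)\<^sup>2 \<le> len")
      case True
      have "card (?W \<inter> B) \<le> card B" by (rule card_mono) (auto simp: B_def)
      also have "\<dots> \<le> 2 * m + 1"
        using card_Un_le[of "{..<m} \<union> {m + h}" "{n..<n+m}"] card_Un_le[of "{..<m}" "{m + h}"]
        by (simp add: B_def)
      finally have "sum ?w ?W \<le> real (2 * m + 1)" using S_card by linarith
      moreover have "(real (2 * m + 1))\<^sup>2 \<le> real len" using True by (metis of_nat_le_iff of_nat_power)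
      ultimately show ?thesis using power2_mono_trans[OF S0] by blast
    next
      case False
      then have "?W \<inter> B \<subseteq> {m + h}" using h n across by (auto simp: B_def)
      then have "card (?W \<inter> B) \<le> 1" using card_mono[of "{m + h}"] by fastforce
      then have "sum ?w ?W \<le> 1" using S_card by linarith
      moreover have "(1::real)\<^sup>2 \<le> real len" using across by simp
      ultimately show ?thesis using power2_mono_trans[OF S0] by blast
    qed
  qed
qed

lemma join_seqs_in_sparse_marked_seqs:
  assumes u: "u \<in> sparse_marked_seqs Z" and v: "v \<in> sparse_marked_seqs Z"
    and h: "(2 * m + 1)\<^sup>2 \<le> h" and n: "m + 2 * h < n"
  shows "join_seqs u v m h n \<in> sparse_marked_seqs Z"
proof -
  have "0 < h" using h by (simp add: power2_eq_square)
  have "snd (join_seqs u v m h n (Suc i)) = snd (join_seqs u v m h n i)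
      \<or> fst (join_seqs u v m h n i) = 1" for i
  proof -
    have "i < m \<Longrightarrow> \<not> Suc i < m \<Longrightarrow> m - 1 = i"
      and "i < n + m \<Longrightarrow> \<not> Suc i < n + m \<Longrightarrow> m - 1 = i - n"
      by arith+
    then show ?thesis
      using sparse_marked_seqsD(3)[OF u, of i] sparse_marked_seqsD(3)[OF v, of "i - n"] \<open>0 < h\<close> n
      by (auto simp: join_seqs_def Suc_diff_le)
  qed
  then show ?thesis
    using sparse_marked_seqsD(1,2)[OF u] sparse_marked_seqsD(1,2)[OF v] join_seqs_window[OF u v h n]
    unfolding sparse_marked_seqs_def by (auto simp: join_seqs_def)
qed

lemma sparse_marked_seqs_perfect:
  assumes x: "x \<in> sparse_marked_seqs Z"
  shows "x islimpt sparse_marked_seqs Z"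
  unfolding islimpt_def
proof (intro allI impI)
  fix U assume "x \<in> U" "open U"
  then obtain m where m: "\<And>w. (\<forall>i<m. w i = x i) \<Longrightarrow> w \<in> U" using open_contains_cylinder by blast
  define h where "h = (2 * m + 1)\<^sup>2"
  define w where "w k = join_seqs x x m (h + k) (m + 2 * (h + k) + 1)" for k
  have w_in: "w k \<in> sparse_marked_seqs Z \<inter> U" for k
  proof
    show "w k \<in> sparse_marked_seqs Z"
      unfolding w_def by (rule join_seqs_in_sparse_marked_seqs[OF x x]) (simp_all add: h_def)
    show "w k \<in> U" by (rule m) (simp add: w_def join_seqs_prefix)
  qed
  have "fst (w 0 (m + h)) = 1" "fst (w 1 (m + h)) = 0" by (simp_all add: w_def join_seqs_def)
  then have "w 0 \<noteq> x \<or> w 1 \<noteq> x" by auto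
  then show "\<exists>y\<in>sparse_marked_seqs Z. y \<in> U \<and> y \<noteq> x" using w_in by blast
qed

lemma top_mixing_sparse_marked_seqs: "top_mixing (sparse_marked_seqs Z) seq_shift"
  unfolding top_mixing_def
proof (intro allI impI)
  fix U V assume "openin (top_of_set (sparse_marked_seqs Z)) U" "openin (top_of_set (sparse_marked_seqs Z)) V"
    and "U \<noteq> {}" "V \<noteq> {}"
  then obtain U' V' where U': "open U'" "U = sparse_marked_seqs Z \<inter> U'"
    and V': "open V'" "V = sparse_marked_seqs Z \<inter> V'"
    by (auto simp: openin_open)
  obtain u v where u: "u \<in> U" and v: "v \<in> V" using \<open>U \<noteq> {}\<close> \<open>V \<noteq> {}\<close> by blast
  obtain m1 where m1: "\<And>w. (\<forall>i<m1. w i = u i) \<Longrightarrow> w \<in> U'"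
    using open_contains_cylinder[OF U'(1)] u U'(2) by blast
  obtain m2 where m2: "\<And>w. (\<forall>i<m2. w i = v i) \<Longrightarrow> w \<in> V'"
    using open_contains_cylinder[OF V'(1)] v V'(2) by blast
  define m where "m = max m1 m2"
  define h where "h = (2 * m + 1)\<^sup>2"
  have nonempty: "U \<inter> {x\<in>sparse_marked_seqs Z. (seq_shift ^^ n) x \<in> V} \<noteq> {}" if n: "m + 2 * h < n" for n
  proof -
    let ?w = "join_seqs u v m h n"
    have "u \<in> sparse_marked_seqs Z" "v \<in> sparse_marked_seqs Z" using u v U'(2) V'(2) by auto
    then have w: "?w \<in> sparse_marked_seqs Z"
      by (rule join_seqs_in_sparse_marked_seqs) (use n in \<open>simp_all add: h_def\<close>)
    have "?w \<in> U'" using m1 by (simp add: join_seqs_prefix m_def)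
    moreover have "(seq_shift ^^ n) ?w \<in> V'"
      using m2 n by (simp add: funpow_seq_shift join_seqs_suffix m_def)
    ultimately show ?thesis
      using w funpow_seq_shift_in_sparse_marked_seqs[OF w, of n] U'(2) V'(2) by blast
  qed
  have "{n. U \<inter> {x\<in>sparse_marked_seqs Z. (seq_shift ^^ n) x \<in> V} = {}} \<subseteq> {..m + 2 * h}"
  proof
    fix n assume "n \<in> {n. U \<inter> {x\<in>sparse_marked_seqs Z. (seq_shift ^^ n) x \<in> V} = {}}"
    then show "n \<in> {..m + 2 * h}" using nonempty[of n] by (cases "m + 2 * h < n") auto
  qed
  then show "finite {n. U \<inter> {x\<in>sparse_marked_seqs Z. (seq_shift ^^ n) x \<in> V} = {}}"
    using finite_subset by blast
qed

text \<open>If every block of length \<open>k\<close> carried a mark, the first \<open>k + 1\<close> blocks would form a window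
  of length \<open>(k + 1) k\<close> with at least \<open>k + 1\<close> marks.\<close>
lemma sparse_marked_seqs_unmarked_block:
  assumes x: "x \<in> sparse_marked_seqs Z"
  obtains t where "\<And>i. i < k \<Longrightarrow> fst (x (t + i)) = 0"
proof (rule ccontr)
  assume "\<not> thesis"
  then have marked: "\<exists>i<k. fst (x (t + i)) = 1" for t
    using that sparse_marked_seqsD(1)[OF x] by blast
  have block: "1 \<le> (\<Sum>i\<in>{b*k..<b*k+k}. fst (x i))" for b
  proof -
    obtain i where "i < k" "fst (x (b*k + i)) = 1" using marked by blast
    moreover have "fst (x (b*k + i)) \<le> (\<Sum>i\<in>{b*k..<b*k+k}. fst (x i))" if "i < k" for i
      using that sparse_marked_seqs_mark_bounds[OF x] by (intro member_le_sum) auto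
    ultimately show ?thesis by fastforce
  qed
  have "real (k + 1) = (\<Sum>b<k+1. 1)" by simp
  also have "\<dots> \<le> (\<Sum>b<k+1. \<Sum>i\<in>{b*k..<b*k+k}. fst (x i))" by (rule sum_mono) (rule block)
  also have "\<dots> = (\<Sum>i<(k+1)*k. fst (x i))" by (rule sum.nat_group)
  also have "\<dots> = (\<Sum>i\<in>{0..<0+(k+1)*k}. fst (x i))" by (simp add: lessThan_atLeast0)
  finally have marks: "real (k + 1) \<le> (\<Sum>i\<in>{0..<0+(k+1)*k}. fst (x i))" .
  have "(real (k + 1))\<^sup>2 \<le> real ((k + 1) * k)"
    using power2_mono_trans[OF _ marks sparse_marked_seqsD(4)[OF x]] by simp
  then have "(k + 1) * (k + 1) \<le> (k + 1) * k" by (simp only: power2_eq_square of_nat_mult[symmetric] of_nat_le_iff)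
  then show False by simp
qed

lemma sparse_marked_seqs_invariant_closed_sets_have_fixpoints:
  fixes Z :: "'a::metric_space set"
  assumes "compact Z"
  shows "invariant_closed_sets_have_fixpoints (sparse_marked_seqs Z) seq_shift"
  unfolding invariant_closed_sets_have_fixpoints_def
proof (intro allI impI)
  fix K assume K: "K \<subseteq> sparse_marked_seqs Z" "K \<noteq> {}" "closed K" "seq_shift ` K \<subseteq> K"
  have "compact K"
    using compact_Int_closed[OF compact_sparse_marked_seqs[OF assms] K(3)] K(1) by (simp add: Int_absorb1)
  define unmarked where "unmarked k = {w::nat \<Rightarrow> real \<times> 'a. \<forall>i<k. fst (w i) = 0}" for k
  have "K \<inter> (\<Inter>k. unmarked k) \<noteq> {}"
  proof (rule compact_imp_fip_image[OF \<open>compact K\<close>])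
    fix k
    have "unmarked k = (\<Inter>i<k. {w. fst (w i) = 0})" by (auto simp: unmarked_def)
    then show "closed (unmarked k)" by (simp add: closed_INT closed_Collect_eq continuous_intros)
  next
    fix I :: "nat set" assume "finite I"
    then obtain M where M: "I \<subseteq> {..<M}" using finite_nat_iff_bounded by auto
    obtain x where x: "x \<in> K" using K(2) by auto
    then obtain t where t: "\<And>i. i < M \<Longrightarrow> fst (x (t + i)) = 0"
      using K(1) sparse_marked_seqs_unmarked_block by blast
    have "(seq_shift ^^ t) x \<in> K" using x K(4) by (induction t) auto
    moreover have "(seq_shift ^^ t) x \<in> unmarked k" if "k \<in> I" for k
      using that M t by (auto simp: unmarked_def funpow_seq_shift add.commute)
    ultimately show "K \<inter> (\<Inter>k\<in>I. unmarked k) \<noteq> {}" by blast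
  qed
  then obtain w where w: "w \<in> K" "\<And>k. w \<in> unmarked k" by blast
  have unmarked_w: "fst (w i) = 0" for i using w(2)[of "Suc i"] by (auto simp: unmarked_def)
  have "w (Suc i) = w i" for i
    using sparse_marked_seqsD(3)[of w Z i] w(1) K(1) unmarked_w[of i] unmarked_w[of "Suc i"]
    by (auto simp: prod_eq_iff)
  then have "seq_shift w = w" by (auto simp: seq_shift_def)
  then show "\<exists>w\<in>K. seq_shift w = w" using w by blast
qed

lemma fixpoints_sparse_marked_seqs:
  "{x\<in>sparse_marked_seqs Z. seq_shift x = x} = (\<lambda>z i. (0, z)) ` Z"
proof
  show "{x\<in>sparse_marked_seqs Z. seq_shift x = x} \<subseteq> (\<lambda>z i. (0, z)) ` Z"
  proof clarify
    fix x assume x: "x \<in> sparse_marked_seqs Z" "seq_shift x = x"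
    have const: "x i = x 0" for i
      by (induction i) (use fun_cong[OF x(2)] in \<open>auto simp: seq_shift_def\<close>)
    have "fst (x 0) \<noteq> 1"
    proof
      assume "fst (x 0) = 1"
      then have "(\<Sum>i\<in>{0..<0+2}. fst (x i)) = 2" using const[of 1] by (simp add: numeral_2_eq_2)
      then show False using sparse_marked_seqsD(4)[OF x(1), of 0 2] by simp
    qed
    then have "x = (\<lambda>i. (0, snd (x 0)))"
      using const sparse_marked_seqsD(1)[OF x(1), of 0] by (auto simp: prod_eq_iff)
    then show "x \<in> (\<lambda>z i. (0, z)) ` Z" using sparse_marked_seqsD(2)[OF x(1), of 0] by blast
  qed
  show "(\<lambda>z i. (0, z)) ` Z \<subseteq> {x\<in>sparse_marked_seqs Z. seq_shift x = x}"
    by (auto simp: sparse_marked_seqs_def seq_shift_def)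
qed

lemma fixpoints_sparse_marked_seqs_homeomorphic:
  fixes Z :: "'a::metric_space set"
  assumes "compact Z"
  shows "{x\<in>sparse_marked_seqs Z. seq_shift x = x} homeomorphic Z"
proof -
  define c :: "'a \<Rightarrow> nat \<Rightarrow> real \<times> 'a" where "c = (\<lambda>z i. (0, z))"
  have "continuous_on Z c" unfolding c_def by (intro continuous_intros)
  moreover have "inj_on c Z" by (auto simp: c_def inj_on_def fun_eq_iff)
  ultimately obtain g where "homeomorphism Z (c ` Z) c g"
    using homeomorphism_compact[OF assms] by blast
  then have "Z homeomorphic c ` Z" unfolding homeomorphic_def by blast
  then show ?thesis unfolding fixpoints_sparse_marked_seqs c_def by (rule homeomorphic_sym[THEN iffD1])
qed

lemma dyn_system_sparse_marked_seqs:
  fixes Z :: "'a::metric_space set"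
  assumes "compact Z" "Z \<noteq> {}"
  shows "dyn_system (sparse_marked_seqs Z) seq_shift"
  unfolding dyn_system_def
proof (intro conjI)
  show "compact (sparse_marked_seqs Z)" by (rule compact_sparse_marked_seqs[OF assms(1)])
  show perfect: "\<forall>x\<in>sparse_marked_seqs Z. x islimpt sparse_marked_seqs Z"
    using sparse_marked_seqs_perfect by blast
  obtain z where "z \<in> Z" using assms(2) by auto
  then have const: "(\<lambda>i. (0, z)) \<in> sparse_marked_seqs Z"
    by (simp add: sparse_marked_seqs_def)
  then obtain y where "y \<in> sparse_marked_seqs Z" "y \<noteq> (\<lambda>i. (0, z))"
    using islimptE[OF sparse_marked_seqs_perfect[OF const] UNIV_I open_UNIV] by blast
  then show "\<exists>x\<in>sparse_marked_seqs Z. \<exists>y\<in>sparse_marked_seqs Z. x \<noteq> y"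
    using const by blast
  show "continuous_on (sparse_marked_seqs Z) seq_shift" by (rule continuous_on_seq_shift)
  show "seq_shift ` sparse_marked_seqs Z = sparse_marked_seqs Z"
    by (rule seq_shift_image_sparse_marked_seqs)
qed

theorem proposition6p3:
  fixes Z :: "'a::metric_space set"
  assumes "compact Z" and "Z \<noteq> {}"
  shows "\<exists>(X :: (nat \<Rightarrow> real) set) T.
           dyn_system X T \<and> top_mixing X T \<and>
           minimal_points X T homeomorphic Z \<and>
           (\<forall>x\<in>minimal_points X T. T x = x)"
proof -
  let ?X = "sparse_marked_seqs Z"
  have compact: "compact ?X" by (rule compact_sparse_marked_seqs[OF assms(1)])
  obtain Y :: "(nat \<Rightarrow> real) set" and \<phi> \<psi> where hom: "homeomorphism ?X Y \<phi> \<psi>"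
    using compact_homeomorphic_real_sequences[OF compact] by blast
  define T where "T = \<phi> \<circ> seq_shift \<circ> \<psi>"
  have conj: "T (\<phi> x) = \<phi> (seq_shift x)" if "x \<in> ?X" for x
    using homeomorphism_apply1[OF hom that] by (simp add: T_def)
  have inv: "seq_shift ` ?X \<subseteq> ?X" by (simp add: seq_shift_image_sparse_marked_seqs)
  have "invariant_closed_sets_have_fixpoints Y T"
    by (rule invariant_closed_sets_have_fixpoints_conjugate[OF hom compact
          sparse_marked_seqs_invariant_closed_sets_have_fixpoints[OF assms(1)] inv]) (rule conj)
  then have minimal: "minimal_points Y T = {y\<in>Y. T y = y}" by (rule minimal_points_eq_fixpoints)
  have "{y\<in>Y. T y = y} homeomorphic {x\<in>?X. seq_shift x = x}"
    by (rule fixpoints_conjugate_homeomorphic[OF hom inv]) (rule conj)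
  then have "minimal_points Y T homeomorphic Z"
    unfolding minimal using fixpoints_sparse_marked_seqs_homeomorphic[OF assms(1)] by (rule homeomorphic_trans)
  moreover have "dyn_system Y T"
    by (rule dyn_system_conjugate[OF hom dyn_system_sparse_marked_seqs[OF assms]]) (rule conj)
  moreover have "top_mixing Y T"
    by (rule top_mixing_factor[OF top_mixing_sparse_marked_seqs homeomorphism_cont1[OF hom]
          homeomorphism_image1[OF hom] inv]) (rule conj)
  moreover have "\<forall>y\<in>minimal_points Y T. T y = y" by (simp add: minimal)
  ultimately show ?thesis by blast
qed

end
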